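(* Let $X$ be a compact metric space, $f:X\to X$ continuous, $x\in X$, and suppose $L=\omega_f(x)$ is totally periodic. Let $Y=\overline{O_f(x)}=O_f(x)\cup L$, for $z\in Y$ let $[z]$ be the connected component of $Y$ containing $z$, let $Y/\mathcal{C}$ be the quotient space obtained by collapsing each connected component of $Y$ to a point, $\pi:Y\to Y/\mathcal{C}$, $\pi(y)=[y]$, the quotient map, and $\tilde f:Y/\mathcal{C}\to Y/\mathcal{C}$, $\tilde f([y])=[f(y)]$, the induced (well-defined, continuous) map. Then: (1) for every $n\in\mathbb{Z}_+$, $[f^n(x)]=\{f^n(x)\}$ and $[f^n(x)]$ is an isolated point of $Y/\mathcal{C}$; (2) if $y\in L$ then $[y]\subset L$; (3) for every $y\in Y$, $f([y])=[f(y)]$, and $f^n([y])=[f^n(y)]$ for all $n\in\mathbb{Z}_+$; (4) for every $z\in L$, $[z]$ is a periodic point of $\tilde f$; (5) if $L$ is infinite, then $\{[y]:\ y\in L\}=\omega_{\tilde f}([x])$.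
   Context: $O_f(x)=\{f^n(x):n\in\mathbb{Z}_+\}$ is the orbit of $x$. $\omega_f(x)=\{y:\ \exists\, n_i\to+\infty,\ f^{n_i}(x)\to y\}$, and it is totally periodic if each of its points $y$ satisfies $f^m(y)=y$ for some $m\ge1$. *)

theory Defs
  imports "HOL-Analysis.Analysis"
begin

definition orbit :: "('a \<Rightarrow> 'a) \<Rightarrow> 'a \<Rightarrow> 'a set" where
  "orbit f x = {(f ^^ n) x | n. True}"

definition omega_limit :: "'a topology \<Rightarrow> ('a \<Rightarrow> 'a) \<Rightarrow> 'a \<Rightarrow> 'a set" where
  "omega_limit T g p = {q. \<exists>r::nat \<Rightarrow> nat. filterlim r at_top sequentially \<and>
                                limitin T (\<lambda>i. (g ^^ (r i)) p) q sequentially}"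

definition totally_periodic :: "('a \<Rightarrow> 'a) \<Rightarrow> 'a set \<Rightarrow> bool" where
  "totally_periodic f L \<longleftrightarrow> (\<forall>y\<in>L. \<exists>m\<ge>1. (f ^^ m) y = y)"

definition quotient_top :: "'a::topological_space set \<Rightarrow> ('a \<Rightarrow> 'b) \<Rightarrow> 'b topology" where
  "quotient_top Y q = topology (\<lambda>U. U \<subseteq> q ` Y \<and> openin (top_of_set Y) {y\<in>Y. q y \<in> U})"

lemma istopology_quotient_top:
  "istopology (\<lambda>U. U \<subseteq> q ` Y \<and> openin (top_of_set Y) {y\<in>Y. q y \<in> U})"
proof -
  have 1: "S \<inter> T \<subseteq> q ` Y \<and> openin (top_of_set Y) {y \<in> Y. q y \<in> S \<inter> T}"
    if S: "S \<subseteq> q ` Y \<and> openin (top_of_set Y) {y \<in> Y. q y \<in> S}"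
    and T: "T \<subseteq> q ` Y \<and> openin (top_of_set Y) {y \<in> Y. q y \<in> T}" for S T
  proof -
    have "{y \<in> Y. q y \<in> S \<inter> T} = {y \<in> Y. q y \<in> S} \<inter> {y \<in> Y. q y \<in> T}" by blast
    then show ?thesis using S T openin_Int[of "top_of_set Y" "{y \<in> Y. q y \<in> S}" "{y \<in> Y. q y \<in> T}"] by auto
  qed
  have 2: "\<Union>K \<subseteq> q ` Y \<and> openin (top_of_set Y) {y \<in> Y. q y \<in> \<Union>K}"
    if K: "\<forall>U\<in>K. U \<subseteq> q ` Y \<and> openin (top_of_set Y) {y \<in> Y. q y \<in> U}" for K
  proof -
    have "{y \<in> Y. q y \<in> \<Union>K} = \<Union>((\<lambda>U. {y \<in> Y. q y \<in> U}) ` K)" by blast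
    then show ?thesis using K openin_Union[of "(\<lambda>U. {y \<in> Y. q y \<in> U}) ` K" "top_of_set Y"] by auto
  qed
  show ?thesis unfolding istopology_def using 1 2 by blast
qed

abbreviation comp :: "'a::topological_space set \<Rightarrow> 'a \<Rightarrow> 'a set" where
  "comp Y z \<equiv> connected_component_set Y z"

text \<open>Induced map on components: [y] maps to [f y] (for any representative y).\<close>
definition induced_map :: "'a::topological_space set \<Rightarrow> ('a \<Rightarrow> 'a) \<Rightarrow> 'a set \<Rightarrow> 'a set" where
  "induced_map Y f C = comp Y (f (SOME y. y \<in> C))"

end

theory Submission
  imports Defs
begin

text \<open>
  A point p of Y outside L is approached by the orbit only at finitely many times, so some ball
  around p meets the orbit at most in p; as Y is the closure of the orbit, p is then an isolated
  point of Y lying on the orbit. An orbit point lying in L is periodic, so the orbit is finite and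
  Y is discrete. Either way every orbit point is isolated in Y, its component is a singleton, and
  all nontrivial components sit inside L. Continuity gives f [y] \<subseteq> [f y]; for periodic y and
  z \<in> [f y] with common period N, the iterate f^(N-1) carries z into [f^N y] = [y], which gives
  equality. Finally an orbit point is isolated in the quotient as well, so the induced orbit can
  accumulate at it only by repeating, which would make L finite.
\<close>

lemma finite_orbit_if_iterates_coincide:
  assumes "(f ^^ a) x = (f ^^ b) x" and "a < b"
  shows "finite (orbit f x)"
proof -
  have "(f ^^ k) x \<in> (\<lambda>j. (f ^^ j) x) ` {..<b}" for k
  proof (cases "k < a")
    case False
    have "(f ^^ (b - a)) ((f ^^ a) x) = (f ^^ (b - a + a)) x"
      by (simp add: funpow_add)
    then have period: "(f ^^ (b - a)) ((f ^^ a) x) = (f ^^ a) x"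
      using assms by simp
    have "(f ^^ k) x = (f ^^ (k - a + a)) x"
      using False by simp
    also have "\<dots> = (f ^^ (k - a)) ((f ^^ a) x)"
      by (simp add: funpow_add)
    also have "\<dots> = (f ^^ ((k - a) mod (b - a))) ((f ^^ a) x)"
      using funpow_mod_eq[OF period] by simp
    also have "\<dots> = (f ^^ ((k - a) mod (b - a) + a)) x"
      by (simp add: funpow_add)
    finally have "(f ^^ k) x = (f ^^ ((k - a) mod (b - a) + a)) x" .
    moreover have "(k - a) mod (b - a) + a < b"
      using assms(2) mod_less_divisor[of "b - a" "k - a"] by linarith
    ultimately show ?thesis by blast
  qed (use assms(2) in auto)
  then show ?thesis
    unfolding orbit_def by (auto intro: finite_subset[of _ "(\<lambda>j. (f ^^ j) x) ` {..<b}"])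
qed

lemma funpow_in_invariant_set: "g ` Y \<subseteq> Y \<Longrightarrow> a \<in> Y \<Longrightarrow> (g ^^ n) a \<in> Y"
  by (induction n) auto

lemma openin_singleton_finite:
  fixes Y :: "'a::t1_space set"
  assumes "finite Y" and "p \<in> Y"
  shows "openin (top_of_set Y) {p}"
proof -
  have "closed (Y - {p})"
    using assms(1) by (simp add: finite_imp_closed)
  then have "open (- (Y - {p}))"
    by (rule open_Compl)
  moreover have "{p} = Y \<inter> - (Y - {p})"
    using assms by auto
  ultimately show ?thesis
    unfolding openin_open by blast
qed

lemma isolated_point_of_closure:
  fixes S :: "'a::metric_space set"
  assumes p: "p \<in> closure S" and "e > 0" and isolated: "ball p e \<inter> S \<subseteq> {p}"
  shows "openin (top_of_set (closure S)) {p}" and "p \<in> S"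
proof -
  have "ball p e \<inter> closure S \<subseteq> closure (ball p e \<inter> S)"
    by (rule open_Int_closure_subset) simp
  also have "\<dots> \<subseteq> {p}"
    using closure_mono[OF isolated] by simp
  finally have "{p} = closure S \<inter> ball p e"
    using p \<open>e > 0\<close> by auto
  then show "openin (top_of_set (closure S)) {p}"
    by (metis open_ball openin_open_Int)
  have "ball p e \<inter> S \<noteq> {}"
    using p \<open>e > 0\<close> open_Int_closure_eq_empty[of "ball p e" S] centre_in_ball by blast
  then show "p \<in> S"
    using isolated by auto
qed

lemma connected_component_isolated_point:
  fixes Y :: "'a::t1_space set"
  assumes "p \<in> Y" and isolated: "openin (top_of_set Y) {p}"
  shows "connected_component_set Y p = {p}"
proof -
  let ?C = "connected_component_set Y p"
  have C: "?C \<subseteq> Y" "p \<in> ?C"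
    using assms(1) by (auto simp: connected_component_subset)
  have "openin (top_of_set ?C) {p}"
    using openin_subset_trans[OF isolated _ C(1)] C(2) by simp
  moreover have "closedin (top_of_set Y) {p}"
    using assms(1) by (intro closed_subset) auto
  then have "closedin (top_of_set ?C) {p}"
    using closedin_subset_trans[OF _ _ C(1)] C(2) by simp
  ultimately show ?thesis
    using connected_connected_component[of Y p] C(2) unfolding connected_clopen by blast
qed

lemma image_connected_component_subset:
  assumes "continuous_on Y g" and "g ` Y \<subseteq> Y" and "a \<in> Y"
  shows "g ` connected_component_set Y a \<subseteq> connected_component_set Y (g a)"
proof (rule connected_component_maximal)
  show "connected (g ` connected_component_set Y a)"
    using assms(1) connected_component_subset connected_connected_component
    by (blast intro: connected_continuous_image continuous_on_subset)
  show "g ` connected_component_set Y a \<subseteq> Y"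
    using assms(2) connected_component_subset[of Y a] by blast
qed (use assms(3) in simp)

lemma funpow_image_connected_component_subset:
  assumes "continuous_on Y g" and "g ` Y \<subseteq> Y" and "a \<in> Y"
  shows "(g ^^ n) ` connected_component_set Y a \<subseteq> connected_component_set Y ((g ^^ n) a)"
proof (induction n)
  case (Suc n)
  have "(g ^^ n) a \<in> Y"
    using assms(2,3) by (rule funpow_in_invariant_set)
  have "(g ^^ Suc n) ` connected_component_set Y a = g ` (g ^^ n) ` connected_component_set Y a"
    by (simp add: image_comp)
  also have "\<dots> \<subseteq> g ` connected_component_set Y ((g ^^ n) a)"
    using Suc by (rule image_mono)
  also have "\<dots> \<subseteq> connected_component_set Y ((g ^^ Suc n) a)"
    using image_connected_component_subset[OF assms(1,2) \<open>(g ^^ n) a \<in> Y\<close>] by simp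
  finally show ?case .
qed simp

lemma periodic_point_in_image_connected_component:
  assumes "continuous_on Y g" and "g ` Y \<subseteq> Y" and "y \<in> Y"
    and "(g ^^ Suc n) y = y" and "(g ^^ Suc n) z = z"
    and "z \<in> connected_component_set Y (g y)"
  shows "z \<in> g ` connected_component_set Y y"
proof -
  have "g y \<in> Y"
    using assms(2,3) by blast
  then have "(g ^^ n) ` connected_component_set Y (g y) \<subseteq> connected_component_set Y ((g ^^ n) (g y))"
    by (rule funpow_image_connected_component_subset[OF assms(1,2)])
  also have "(g ^^ n) (g y) = y"
    using assms(4) by (simp add: funpow_swap1)
  finally have "(g ^^ n) z \<in> connected_component_set Y y"
    using assms(6) by blast
  moreover have "z = g ((g ^^ n) z)"
    using assms(5) by simp
  ultimately show ?thesis by blast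
qed

lemma induced_map_connected_component:
  assumes "continuous_on Y g" and "g ` Y \<subseteq> Y" and "a \<in> Y"
  shows "induced_map Y g (connected_component_set Y a) = connected_component_set Y (g a)"
proof -
  define w where "w = (SOME w. w \<in> connected_component_set Y a)"
  have "w \<in> connected_component_set Y a"
    unfolding w_def using someI[of "\<lambda>w. w \<in> connected_component_set Y a" a] assms(3) by simp
  then have "g w \<in> g ` connected_component_set Y a"
    by (rule imageI)
  then have "g w \<in> connected_component_set Y (g a)"
    by (rule subsetD[OF image_connected_component_subset[OF assms]])
  then show ?thesis
    unfolding induced_map_def w_def[symmetric] by (rule connected_component_eq)
qed

lemma funpow_induced_map_connected_component:
  assumes "continuous_on Y g" and "g ` Y \<subseteq> Y" and "a \<in> Y"
  shows "(induced_map Y g ^^ n) (connected_component_set Y a)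
    = connected_component_set Y ((g ^^ n) a)"
proof (induction n)
  case (Suc n)
  have "(g ^^ n) a \<in> Y"
    using assms(2,3) by (rule funpow_in_invariant_set)
  then show ?case
    using Suc induced_map_connected_component[OF assms(1,2)] by simp
qed simp

lemma openin_quotient_top:
  "openin (quotient_top Y q) U \<longleftrightarrow> U \<subseteq> q ` Y \<and> openin (top_of_set Y) {y\<in>Y. q y \<in> U}"
  unfolding quotient_top_def topology_inverse'[OF istopology_quotient_top] by simp

lemma topspace_quotient_top: "topspace (quotient_top Y q) = q ` Y"
proof
  show "topspace (quotient_top Y q) \<subseteq> q ` Y"
    unfolding topspace_def by (rule Union_least) (simp add: openin_quotient_top)
  have "{y\<in>Y. q y \<in> q ` Y} = Y"
    by blast
  then have "openin (quotient_top Y q) (q ` Y)"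
    unfolding openin_quotient_top by simp
  then show "q ` Y \<subseteq> topspace (quotient_top Y q)"
    by (rule openin_subset)
qed

lemma continuous_map_quotient_top: "continuous_map (top_of_set Y) (quotient_top Y q) q"
  unfolding continuous_map_def topspace_quotient_top using openin_quotient_top by auto

lemma openin_quotient_top_singleton:
  assumes "p \<in> Y" and "openin (top_of_set Y) {p}" and "\<And>y. y \<in> Y \<Longrightarrow> q y = q p \<Longrightarrow> y = p"
  shows "openin (quotient_top Y q) {q p}"
proof -
  have "{y\<in>Y. q y \<in> {q p}} = {p}"
    using assms by auto
  then show ?thesis
    unfolding openin_quotient_top using assms by auto
qed

locale totally_periodic_orbit =
  fixes X :: "'a::metric_space set" and f :: "'a \<Rightarrow> 'a" and x :: 'a and L Y :: "'a set"
  assumes compact_X: "compact X" and continuous_f: "continuous_on X f"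
    and f_X: "f ` X \<subseteq> X" and x_X: "x \<in> X"
    and L_def: "L = omega_limit (top_of_set X) f x"
    and totally_periodic: "totally_periodic f L"
    and Y_def: "Y = closure (orbit f x)"
begin

lemma iterate_in_X: "(f ^^ n) x \<in> X"
  using f_X x_X by (rule funpow_in_invariant_set)

lemma iterate_in_Y: "(f ^^ n) x \<in> Y"
proof -
  have "(f ^^ n) x \<in> orbit f x"
    unfolding orbit_def by blast
  then show ?thesis
    unfolding Y_def by (rule subsetD[OF closure_subset])
qed

lemma Y_subset_X: "Y \<subseteq> X"
  unfolding Y_def
proof (rule closure_minimal)
  show "orbit f x \<subseteq> X"
    unfolding orbit_def using iterate_in_X by blast
  show "closed X"
    using compact_X by (rule compact_imp_closed)
qed

lemma in_L_iff:
  "q \<in> L \<longleftrightarrow> q \<in> X \<and> (\<exists>r. filterlim r at_top sequentially \<and> (\<lambda>i. (f ^^ r i) x) \<longlonglongrightarrow> q)"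
  unfolding L_def omega_limit_def using iterate_in_X
  by (auto simp: limitin_subtopology limitin_canonical_iff)

lemma L_subset_Y: "L \<subseteq> Y"
proof
  fix q assume "q \<in> L"
  then obtain r where "(\<lambda>i. (f ^^ r i) x) \<longlonglongrightarrow> q"
    using in_L_iff by blast
  then show "q \<in> Y"
    unfolding Y_def closure_sequential orbit_def by (intro exI[of _ "\<lambda>i. (f ^^ r i) x"]) auto
qed

lemma continuous_on_Y: "continuous_on Y f"
  using continuous_f Y_subset_X by (rule continuous_on_subset)

lemma f_Y: "f ` Y \<subseteq> Y"
proof -
  have "f ` orbit f x \<subseteq> Y"
    unfolding orbit_def using iterate_in_Y[of "Suc _"] by auto
  then show ?thesis
    using image_closure_subset[OF continuous_on_Y[unfolded Y_def]] Y_def by simp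
qed

lemma in_L_if_frequently_near:
  assumes "p \<in> X" and near: "\<And>N e. e > 0 \<Longrightarrow> \<exists>k\<ge>N. dist ((f ^^ k) x) p < e"
  shows "p \<in> L"
proof -
  define r where "r N = (SOME k. k \<ge> N \<and> dist ((f ^^ k) x) p < inverse (real N + 1))" for N
  have r: "r N \<ge> N" "dist ((f ^^ r N) x) p < inverse (real N + 1)" for N
    using someI_ex[OF near[of "inverse (real N + 1)" N]] unfolding r_def by auto
  have "filterlim r at_top sequentially"
    unfolding filterlim_at_top by (metis eventually_at_top_linorder order_trans r(1))
  moreover have "(\<lambda>i. (f ^^ r i) x) \<longlonglongrightarrow> p"
    unfolding lim_sequentially
  proof (intro allI impI)
    fix e :: real assume "e > 0"
    then obtain n where n: "n > 0" "inverse (real n) < e"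
      using ex_inverse_of_nat_less by blast
    have "dist ((f ^^ r m) x) p < e" if "m \<ge> n" for m
    proof -
      have "inverse (real m + 1) \<le> inverse (real n)"
        using that n by (simp add: field_simps)
      then show ?thesis
        using r(2)[of m] n by linarith
    qed
    then show "\<exists>N. \<forall>m\<ge>N. dist ((f ^^ r m) x) p < e" by blast
  qed
  ultimately show ?thesis
    using in_L_iff \<open>p \<in> X\<close> by blast
qed

lemma orbit_isolated_near_point_outside_L:
  assumes "p \<in> X" and "p \<notin> L"
  obtains e where "e > 0" and "ball p e \<inter> orbit f x \<subseteq> {p}"
proof -
  obtain N e0 where e0: "e0 > 0" "\<And>k. k \<ge> N \<Longrightarrow> dist ((f ^^ k) x) p \<ge> e0"
    using in_L_if_frequently_near assms by (meson not_le)
  obtain d where d: "d > 0" "\<And>z. z \<in> (\<lambda>k. (f ^^ k) x) ` {..<N} \<Longrightarrow> z \<noteq> p \<Longrightarrow> d \<le> dist p z"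
    using finite_set_avoid[of "(\<lambda>k. (f ^^ k) x) ` {..<N}" p] by blast
  have "dist p ((f ^^ k) x) < min e0 d \<Longrightarrow> (f ^^ k) x = p" for k
    using e0(2)[of k] d(2)[of "(f ^^ k) x"] by (cases "k < N") (auto simp: dist_commute)
  then have "ball p (min e0 d) \<inter> orbit f x \<subseteq> {p}"
    unfolding orbit_def by auto
  then show ?thesis
    using e0(1) d(1) by (intro that[of "min e0 d"]) auto
qed

lemma point_outside_L:
  assumes "p \<in> Y" and "p \<notin> L"
  shows "openin (top_of_set Y) {p}" and "p \<in> orbit f x"
proof -
  obtain e where "e > 0" "ball p e \<inter> orbit f x \<subseteq> {p}"
    using orbit_isolated_near_point_outside_L assms Y_subset_X by blast
  then show "openin (top_of_set Y) {p}" and "p \<in> orbit f x"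
    using isolated_point_of_closure assms(1) unfolding Y_def by blast+
qed

lemma component_outside_L: "p \<in> Y \<Longrightarrow> p \<notin> L \<Longrightarrow> comp Y p = {p}"
  using connected_component_isolated_point point_outside_L(1) by blast

lemma iterate_isolated_in_Y: "openin (top_of_set Y) {(f ^^ n) x}"
proof (cases "(f ^^ n) x \<in> L")
  case True
  then obtain m where "m \<ge> 1" "(f ^^ m) ((f ^^ n) x) = (f ^^ n) x"
    using totally_periodic unfolding totally_periodic_def by blast
  then have "(f ^^ n) x = (f ^^ (m + n)) x" and "n < m + n"
    by (simp_all add: funpow_add)
  then have "finite (orbit f x)"
    by (rule finite_orbit_if_iterates_coincide)
  then have "finite Y"
    unfolding Y_def by (simp add: finite_imp_closed)
  then show ?thesis
    using openin_singleton_finite iterate_in_Y by blast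
qed (use point_outside_L(1) iterate_in_Y in blast)

lemma component_iterate: "comp Y ((f ^^ n) x) = {(f ^^ n) x}"
  using connected_component_isolated_point iterate_in_Y iterate_isolated_in_Y by blast

lemma iterate_isolated_in_quotient: "openin (quotient_top Y (comp Y)) {comp Y ((f ^^ n) x)}"
  using component_iterate iterate_in_Y iterate_isolated_in_Y
  by (intro openin_quotient_top_singleton) (auto dest: connected_component_eq_self)

lemma component_subset_L:
  assumes "y \<in> L"
  shows "comp Y y \<subseteq> L"
proof
  fix z assume z: "z \<in> comp Y y"
  show "z \<in> L"
  proof (rule ccontr)
    assume "z \<notin> L"
    have "z \<in> Y"
      using z connected_component_subset by blast
    then have "comp Y y = {z}"
      using component_outside_L[OF _ \<open>z \<notin> L\<close>] connected_component_eq[OF z] by simp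
    moreover have "y \<in> comp Y y"
      using assms L_subset_Y by auto
    ultimately show False
      using assms \<open>z \<notin> L\<close> by simp
  qed
qed

lemma image_component:
  assumes y: "y \<in> Y"
  shows "f ` comp Y y = comp Y (f y)"
proof
  show "f ` comp Y y \<subseteq> comp Y (f y)"
    using image_connected_component_subset[OF continuous_on_Y f_Y y] .
  show "comp Y (f y) \<subseteq> f ` comp Y y"
  proof (cases "y \<in> L \<and> f y \<in> L")
    case True
    obtain m where m: "m \<ge> 1" "(f ^^ m) y = y"
      using True totally_periodic unfolding totally_periodic_def by blast
    show ?thesis
    proof
      fix z assume z: "z \<in> comp Y (f y)"
      then obtain k where k: "k \<ge> 1" "(f ^^ k) z = z"
        using True component_subset_L totally_periodic unfolding totally_periodic_def by blast
      define N where "N = k * m - 1"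
      have "Suc N = k * m"
        unfolding N_def using k(1) m(1) by (simp add: Suc_le_eq)
      then have "(f ^^ Suc N) y = y" and "(f ^^ Suc N) z = z"
        using funpow_mod_eq[OF m(2), of "k * m"] funpow_mod_eq[OF k(2), of "k * m"] by simp_all
      then show "z \<in> f ` comp Y y"
        by (rule periodic_point_in_image_connected_component[OF continuous_on_Y f_Y y _ _ z])
    qed
  next
    case False
    then consider "y \<notin> L" | "f y \<notin> L"
      by blast
    then have "comp Y (f y) = {f y}"
    proof cases
      case 1
      then obtain n where "y = (f ^^ n) x"
        using point_outside_L(2) y unfolding orbit_def by blast
      then show ?thesis
        using component_iterate[of "Suc n"] by simp
    next
      case 2
      then show ?thesis
        using component_outside_L f_Y y by blast
    qed
    then show ?thesis
      using y by auto
  qed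
qed

lemma funpow_image_component: "y \<in> Y \<Longrightarrow> (f ^^ n) ` comp Y y = comp Y ((f ^^ n) y)"
proof (induction n)
  case (Suc n)
  have "(f ^^ n) y \<in> Y"
    using f_Y Suc.prems by (rule funpow_in_invariant_set)
  have "(f ^^ Suc n) ` comp Y y = f ` (f ^^ n) ` comp Y y"
    by (simp add: image_comp)
  also have "\<dots> = comp Y ((f ^^ Suc n) y)"
    using Suc image_component[OF \<open>(f ^^ n) y \<in> Y\<close>] by simp
  finally show ?case .
qed simp

lemma component_periodic:
  assumes "z \<in> L"
  shows "\<exists>m\<ge>1. (induced_map Y f ^^ m) (comp Y z) = comp Y z"
proof -
  obtain m where "m \<ge> 1" "(f ^^ m) z = z"
    using assms totally_periodic unfolding totally_periodic_def by blast
  moreover have "z \<in> Y"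
    using assms L_subset_Y by blast
  ultimately show ?thesis
    using funpow_induced_map_connected_component[OF continuous_on_Y f_Y] by auto
qed

lemma component_iterate_eq_iterate:
  "(induced_map Y f ^^ n) (comp Y x) = comp Y ((f ^^ n) x)"
proof -
  have "x \<in> Y"
    using iterate_in_Y[of 0] by simp
  then show ?thesis
    by (rule funpow_induced_map_connected_component[OF continuous_on_Y f_Y])
qed

lemma components_of_L_subset_omega_limit:
  "comp Y ` L \<subseteq> omega_limit (quotient_top Y (comp Y)) (induced_map Y f) (comp Y x)"
proof
  fix Q assume "Q \<in> comp Y ` L"
  then obtain y where y: "y \<in> L" "Q = comp Y y" by blast
  then obtain r where r: "filterlim r at_top sequentially" "(\<lambda>i. (f ^^ r i) x) \<longlonglongrightarrow> y"
    using in_L_iff by blast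
  have "limitin (top_of_set Y) (\<lambda>i. (f ^^ r i) x) y sequentially"
    using r y L_subset_Y iterate_in_Y by (auto simp: limitin_subtopology limitin_canonical_iff)
  from continuous_map_limit[OF continuous_map_quotient_top this]
  have "limitin (quotient_top Y (comp Y)) (\<lambda>i. comp Y ((f ^^ r i) x)) Q sequentially"
    using y(2) by (simp add: o_def)
  then show "Q \<in> omega_limit (quotient_top Y (comp Y)) (induced_map Y f) (comp Y x)"
    unfolding omega_limit_def component_iterate_eq_iterate using r(1) by blast
qed

lemma omega_limit_subset_components_of_L:
  assumes "infinite L"
  shows "omega_limit (quotient_top Y (comp Y)) (induced_map Y f) (comp Y x) \<subseteq> comp Y ` L"
proof
  fix Q assume "Q \<in> omega_limit (quotient_top Y (comp Y)) (induced_map Y f) (comp Y x)"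
  then obtain r where r: "filterlim r at_top sequentially"
    and lim: "limitin (quotient_top Y (comp Y)) (\<lambda>i. comp Y ((f ^^ r i) x)) Q sequentially"
    unfolding omega_limit_def component_iterate_eq_iterate by blast
  have "Q \<in> comp Y ` Y"
    using limitin_topspace[OF lim] by (simp add: topspace_quotient_top)
  then obtain q where q: "q \<in> Y" "Q = comp Y q"
    by blast
  show "Q \<in> comp Y ` L"
  proof (cases "q \<in> L")
    case False
    then obtain n where n: "q = (f ^^ n) x"
      using point_outside_L(2)[OF q(1)] unfolding orbit_def by blast
    have "openin (quotient_top Y (comp Y)) {Q}"
      using iterate_isolated_in_quotient[of n] q n by simp
    then have "\<forall>\<^sub>F i in sequentially. comp Y ((f ^^ r i) x) \<in> {Q}"
      using lim unfolding limitin_def by blast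
    moreover have "\<forall>\<^sub>F i in sequentially. Suc n \<le> r i"
      using r unfolding filterlim_at_top by blast
    ultimately have "\<forall>\<^sub>F i in sequentially. comp Y ((f ^^ r i) x) \<in> {Q} \<and> Suc n \<le> r i"
      by (rule eventually_conj)
    then obtain i where "comp Y ((f ^^ r i) x) = comp Y ((f ^^ n) x)" and "n < r i"
      using q n unfolding eventually_sequentially by auto
    then have "(f ^^ n) x = (f ^^ r i) x" and "n < r i"
      by (simp_all add: component_iterate)
    then have "finite (orbit f x)"
      by (rule finite_orbit_if_iterates_coincide)
    then have "finite L"
      using L_subset_Y finite_subset unfolding Y_def by (metis closure_closed finite_imp_closed)
    then show ?thesis
      using assms by blast
  qed (use q in blast)
qed

end

theorem lemma2p7:
  fixes X :: "'a::metric_space set" and f :: "'a \<Rightarrow> 'a" and x :: 'a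
    and L Y :: "'a set"
  assumes "compact X" and "continuous_on X f" and "f ` X \<subseteq> X" and "x \<in> X"
    and L_def: "L = omega_limit (top_of_set X) f x"
    and "totally_periodic f L"
    and Y_def: "Y = closure (orbit f x)"
  shows
    "(\<forall>n. comp Y ((f ^^ n) x) = {(f ^^ n) x} \<and>
              openin (quotient_top Y (comp Y)) {comp Y ((f ^^ n) x)}) \<and>
     (\<forall>y\<in>L. comp Y y \<subseteq> L) \<and>
     (\<forall>y\<in>Y. f ` comp Y y = comp Y (f y) \<and> (\<forall>n. (f ^^ n) ` comp Y y = comp Y ((f ^^ n) y))) \<and>
     (\<forall>z\<in>L. \<exists>m\<ge>1. (induced_map Y f ^^ m) (comp Y z) = comp Y z) \<and>
     (infinite L \<longrightarrow> comp Y ` L = omega_limit (quotient_top Y (comp Y)) (induced_map Y f) (comp Y x))"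
proof -
  interpret totally_periodic_orbit X f x L Y
    using assms by unfold_locales
  show ?thesis
    using component_iterate iterate_isolated_in_quotient component_subset_L
      image_component funpow_image_component component_periodic
      components_of_L_subset_omega_limit omega_limit_subset_components_of_L
    by (simp add: subset_antisym)
qed

end
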